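(* (1) If $\mathbb{E}\min(Z,W)<\infty$, then $\sup_{n\in\mathbb{N}}|R_n|<\infty$ almost surely. (2) If $\mathbb{E}\min(Z,W)=\infty$, then $\sup_{n\in\mathbb{N}}|R_n|=\infty$ almost surely.
   Context: Let $Z,W,(Z_n)_{n\ge1},(W_n)_{n\ge1}$ be independent, identically distributed random variables taking values in $\mathbb{N}=\{1,2,3,\dots\}$. Define sets $T_n\subset\mathbb{Z}$ recursively by $T_n=\{n\}$ for $n\le 0$ and $T_n=\{n\}\cup T_{n-Z_n}\cup T_{n-W_n}$ for $n\ge1$. Let $\mathcal{L}_n=T_n\cap\{0,-1,-2,\dots\}$ and $R_n=\max\mathcal{L}_n$. *)

theory Defs
  imports "HOL-Probability.Probability"
begin

text \<open>Given sample sequences z w (z n = Z_n, w n = W_n), reach z w n m means m \<in> T_n,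
  where T_n = {n} for n \<le> 0 and T_n = {n} \<union> T_(n - Z_n) \<union> T_(n - W_n) for n \<ge> 1
  (least solution of the recursion).\<close>
inductive reach :: "(nat \<Rightarrow> nat) \<Rightarrow> (nat \<Rightarrow> nat) \<Rightarrow> int \<Rightarrow> int \<Rightarrow> bool"
  for z w :: "nat \<Rightarrow> nat" where
  refl: "reach z w n n"
| stepZ: "n \<ge> 1 \<Longrightarrow> reach z w (n - int (z (nat n))) m \<Longrightarrow> reach z w n m"
| stepW: "n \<ge> 1 \<Longrightarrow> reach z w (n - int (w (nat n))) m \<Longrightarrow> reach z w n m"

definition Tset :: "(nat \<Rightarrow> nat) \<Rightarrow> (nat \<Rightarrow> nat) \<Rightarrow> int \<Rightarrow> int set" where
  "Tset z w n = {m. reach z w n m}"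

definition Lset :: "(nat \<Rightarrow> nat) \<Rightarrow> (nat \<Rightarrow> nat) \<Rightarrow> int \<Rightarrow> int set" where
  "Lset z w n = Tset z w n \<inter> {..0}"

definition Rval :: "(nat \<Rightarrow> nat) \<Rightarrow> (nat \<Rightarrow> nat) \<Rightarrow> int \<Rightarrow> int" where
  "Rval z w n = Max (Lset z w n)"

end

theory Submission
  imports Defs
begin

text \<open>If min(Z_k, W_k) < k for all k \<ge> N, then from every n \<ge> 1 one can descend through T_n by
  jumps that stay positive until a position below N is reached, so T_n has a non-positive point
  within max_{k<N} Z_k of 0. Conversely, if min(Z_n, W_n) > n + B then T_n = {n, n - Z_n, n - W_n}
  and |R_n| > B. Since P(min(Z_k, W_k) > k) is summable iff E min(Z, W) < \<infinity>, the first
  Borel--Cantelli lemma gives the first case almost surely; in the second case the events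
  {min(Z_n, W_n) > n + B} are independent with divergent probabilities, so for every B one of
  them occurs almost surely.\<close>

lemma reach_iff:
  "reach z w n m \<longleftrightarrow>
     m = n \<or> (n \<ge> 1 \<and> (reach z w (n - int (z (nat n))) m \<or> reach z w (n - int (w (nat n))) m))"
  by (subst reach.simps) auto

lemma Tset_nonpos: "n \<le> 0 \<Longrightarrow> Tset z w n = {n}"
  unfolding Tset_def by (intro set_eqI, simp only: mem_Collect_eq, subst reach_iff) auto

lemma Tset_step:
  "n \<ge> 1 \<Longrightarrow>
     Tset z w n = insert n (Tset z w (n - int (z (nat n))) \<union> Tset z w (n - int (w (nat n))))"
  unfolding Tset_def by (intro set_eqI, simp only: mem_Collect_eq, subst reach_iff) auto

lemma finite_Tset:
  assumes "\<And>k. z k \<ge> 1" and "\<And>k. w k \<ge> 1"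
  shows "finite (Tset z w n)"
proof (induction "nat n" arbitrary: n rule: less_induct)
  case less
  show ?case
  proof (cases "n \<ge> 1")
    case True
    have "finite (Tset z w (n - int (z (nat n))))" "finite (Tset z w (n - int (w (nat n))))"
      using less assms[of "nat n"] True by simp_all
    with True show ?thesis by (simp add: Tset_step)
  qed (simp add: Tset_nonpos)
qed

lemma Rval_bounds:
  assumes "\<And>k. z k \<ge> 1" and "\<And>k. w k \<ge> 1" and "m \<in> Lset z w n"
  shows "m \<le> Rval z w n" and "Rval z w n \<le> 0"
proof -
  have "finite (Lset z w n)"
    unfolding Lset_def using finite_Tset[OF assms(1,2)] by simp
  then show "m \<le> Rval z w n"
    unfolding Rval_def using assms(3) by (rule Max_ge)
  from \<open>finite (Lset z w n)\<close> assms(3) have "Rval z w n \<in> Lset z w n"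
    unfolding Rval_def by (intro Max_in) auto
  then show "Rval z w n \<le> 0" by (simp add: Lset_def)
qed

text \<open>Follow a jump shorter than the current position as long as there is one (always the
  case from N on); the first jump into the non-positive integers then starts below N, so it
  overshoots by at most C.\<close>
lemma ex_reach_nonpos_ge:
  assumes pz: "\<And>k. z k \<ge> 1" and pw: "\<And>k. w k \<ge> 1"
    and short: "\<And>k. k \<ge> N \<Longrightarrow> min (z k) (w k) < k" and C: "\<And>k. k < N \<Longrightarrow> int (z k) \<le> C"
    and "n \<ge> 1"
  shows "\<exists>m. reach z w n m \<and> - C \<le> m \<and> m \<le> 0"
  using \<open>n \<ge> 1\<close>
proof (induction "nat n" arbitrary: n rule: less_induct)
  case less
  define k where "k = nat n"
  have n: "n = int k" "k \<ge> 1" using less.prems k_def by simp_all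
  obtain j where j: "j = z k \<or> j = w k" and jump: "j < k \<or> (k < N \<and> j = z k)"
    using short[of k] by (cases "k < N") (auto simp: min_def split: if_splits)
  have step: "reach z w n m" if "reach z w (n - int j) m" for m
    using j that n reach.stepZ[of n z w m] reach.stepW[of n z w m] by auto
  show ?case
  proof (cases "n - int j \<ge> 1")
    case True
    moreover have "nat (n - int j) < nat n" using n j pz[of k] pw[of k] by auto
    ultimately obtain m where "reach z w (n - int j) m" "- C \<le> m" "m \<le> 0"
      using less.hyps by blast
    with step show ?thesis by blast
  next
    case False
    with jump n C[of k] have "- C \<le> n - int j" by auto
    with False step reach.refl show ?thesis by (intro exI[of _ "n - int j"]) auto
  qed
qed

lemma Rval_bounded_if_eventually_short_jump:
  assumes "\<And>k. z k \<ge> 1" and "\<And>k. w k \<ge> 1"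
    and "eventually (\<lambda>k. min (z k) (w k) < k) sequentially"
  shows "\<exists>B::int. \<forall>n::nat. n \<ge> 1 \<longrightarrow> \<bar>Rval z w (int n)\<bar> \<le> B"
proof -
  obtain N where N: "\<And>k. k \<ge> N \<Longrightarrow> min (z k) (w k) < k"
    using assms(3) unfolding eventually_sequentially by blast
  define C where "C = (\<Sum>k<N. int (z k))"
  have C: "int (z k) \<le> C" if "k < N" for k
    unfolding C_def using that by (intro member_le_sum) auto
  have "\<bar>Rval z w n\<bar> \<le> C" if n: "n \<ge> 1" for n
  proof -
    obtain m where "reach z w n m" "- C \<le> m" "m \<le> 0"
      using ex_reach_nonpos_ge[OF assms(1,2) N C n] by blast
    then have "m \<in> Lset z w n" by (simp add: Lset_def Tset_def)
    with Rval_bounds[OF assms(1,2)] \<open>- C \<le> m\<close> show ?thesis by fastforce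
  qed
  then show ?thesis by (intro exI[of _ C] allI impI) auto
qed

lemma Rval_long_jumps:
  assumes "n \<ge> 1" and "z n \<ge> n" and "w n \<ge> n"
  shows "Rval z w (int n) = int n - int (min (z n) (w n))"
proof -
  have "Lset z w (int n) = {int n - int (z n), int n - int (w n)}"
    using assms unfolding Lset_def by (auto simp: Tset_step Tset_nonpos)
  then show ?thesis
    unfolding Rval_def by (simp add: max_def min_def)
qed

lemma Rval_unbounded_if_long_jumps:
  assumes "\<forall>B. \<exists>n \<ge> 1. n + B < min (z n) (w n)"
  shows "\<forall>B::int. \<exists>n::nat. n \<ge> 1 \<and> \<bar>Rval z w (int n)\<bar> > B"
proof
  fix B :: int
  obtain n where n: "n \<ge> 1" "n + nat B < min (z n) (w n)"
    using assms by blast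
  then have "Rval z w (int n) = int n - int (min (z n) (w n))"
    by (intro Rval_long_jumps) auto
  with n show "\<exists>n::nat. n \<ge> 1 \<and> \<bar>Rval z w (int n)\<bar> > B"
    by (intro exI[of _ n]) auto
qed

lemma (in prob_space) indep_events_compl:
  assumes "indep_events A I"
  shows "indep_events (\<lambda>i. space M - A i) I"
proof -
  have "indep_sets (\<lambda>i. sigma_sets (space M) {A i}) I"
    using assms unfolding indep_events_def_alt by (intro indep_sets_sigma) (auto simp: Int_stable_def)
  then show ?thesis
    unfolding indep_events_def_alt
    by (rule indep_sets_mono_sets) (auto intro: sigma_sets.Compl sigma_sets.Basic)
qed

lemma (in prob_space) AE_ex_mem_if_indep_events_not_summable:
  fixes A :: "nat \<Rightarrow> 'a set"
  assumes indep: "indep_events A UNIV" and diverges: "\<not> summable (\<lambda>j. prob (A j))"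
  shows "AE x in M. \<exists>j. x \<in> A j"
proof -
  have [measurable]: "A j \<in> events" for j
    using indep by (auto simp: indep_events_def)
  define H where "H = space M - (\<Union>j. A j)"
  have prob_H_le: "prob H \<le> exp (- (\<Sum>j<n. prob (A j)))" for n
  proof (cases "n = 0")
    case False
    have "prob H \<le> prob (\<Inter>j<n. space M - A j)"
      using False by (intro finite_measure_mono) (auto simp: H_def)
    also have "\<dots> = (\<Prod>j<n. prob (space M - A j))"
      using indep_events_compl[OF indep] False unfolding indep_events_def by auto
    also have "\<dots> = (\<Prod>j<n. 1 - prob (A j))"
      by (simp add: prob_compl)
    also have "\<dots> \<le> (\<Prod>j<n. exp (- prob (A j)))"
    proof (intro prod_mono conjI)
      fix j
      show "1 - prob (A j) \<le> exp (- prob (A j))"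
        using exp_ge_add_one_self[of "- prob (A j)"] by simp
    qed simp
    also have "\<dots> = exp (- (\<Sum>j<n. prob (A j)))"
      by (simp add: exp_sum[symmetric] sum_negf)
    finally show ?thesis .
  qed simp
  have small: "prob H \<le> \<epsilon>" if "\<epsilon> > 0" for \<epsilon>
  proof -
    obtain n where n: "- ln \<epsilon> < (\<Sum>j<n. prob (A j))"
      using diverges summableI_nonneg_bounded[of "\<lambda>j. prob (A j)" "- ln \<epsilon>"]
      by (meson measure_nonneg not_le)
    have "exp (- (\<Sum>j<n. prob (A j))) < exp (ln \<epsilon>)"
      using n by simp
    with prob_H_le[of n] that show ?thesis by simp
  qed
  have "prob H \<le> 0"
    using small by (rule field_le_epsilon) simp
  then have "prob H = 0"
    using measure_nonneg[of M H] by linarith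
  then have "AE x in M. x \<notin> H"
    by (simp add: prob_eq_0 H_def)
  then show ?thesis
    by (rule AE_mp) (auto simp: H_def intro!: AE_I2)
qed

lemma (in prob_space) indep_events_of_pairs:
  fixes Z W :: "'i \<Rightarrow> 'a \<Rightarrow> 'b::countable"
  assumes indep: "indep_vars (\<lambda>_. count_space UNIV) (\<lambda>i. case i of Inl n \<Rightarrow> Z n | Inr n \<Rightarrow> W n) UNIV"
    and "inj f"
  shows "indep_events (\<lambda>j. {x \<in> space M. P j (Z (f j) x) (W (f j) x)}) UNIV"
proof -
  define X where "X = (\<lambda>i. case i of Inl n \<Rightarrow> Z n | Inr n \<Rightarrow> W n)"
  define K where "K j = {Inl (f j), Inr (f j)}" for j
  have "indep_vars (\<lambda>j. PiM (K j) (\<lambda>_. count_space UNIV)) (\<lambda>j \<omega>. restrict (\<lambda>i. X i \<omega>) (K j)) UNIV"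
    using indep \<open>inj f\<close> unfolding X_def K_def
    by (intro indep_vars_restrict) (auto simp: disjoint_family_on_def dest: injD)
  then have "indep_events (\<lambda>j. {\<omega> \<in> space M.
      P j (restrict (\<lambda>i. X i \<omega>) (K j) (Inl (f j))) (restrict (\<lambda>i. X i \<omega>) (K j) (Inr (f j)))}) UNIV"
    by (rule indep_eventsI_indep_vars) (simp add: K_def)
  then show ?thesis
    by (simp add: X_def K_def)
qed

lemma ennreal_suminf_less_top_iff:
  fixes f :: "nat \<Rightarrow> real"
  assumes "\<And>k. 0 \<le> f k"
  shows "(\<Sum>k. ennreal (f k)) < \<infinity> \<longleftrightarrow> summable f"
proof
  assume "(\<Sum>k. ennreal (f k)) < \<infinity>"
  then show "summable f"
    using summable_suminf_not_top[of f, OF assms] by simp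
next
  assume "summable f"
  then show "(\<Sum>k. ennreal (f k)) < \<infinity>"
    using ennreal_suminf_neq_top[of f, OF _ assms] by (simp add: top.not_eq_extremum)
qed

locale iid_jumps = prob_space M for M :: "'a measure" +
  fixes Z W :: "nat \<Rightarrow> 'a \<Rightarrow> nat"
  assumes indep: "indep_vars (\<lambda>_. count_space UNIV) (\<lambda>i. case i of Inl n \<Rightarrow> Z n | Inr n \<Rightarrow> W n) UNIV"
    and distr_Z: "\<And>n. distr M (count_space UNIV) (Z n) = distr M (count_space UNIV) (Z 0)"
    and distr_W: "\<And>n. distr M (count_space UNIV) (W n) = distr M (count_space UNIV) (Z 0)"
begin

lemma measurable_Z [measurable]: "Z n \<in> measurable M (count_space UNIV)"
  and measurable_W [measurable]: "W n \<in> measurable M (count_space UNIV)"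
  using indep unfolding indep_vars_def by (metis UNIV_I sum.case)+

lemma prob_less_eq_measure_distr:
  assumes "X \<in> measurable M (count_space UNIV)"
  shows "prob {x \<in> space M. k < X x} = measure (distr M (count_space UNIV) X) {k<..}"
  using assms by (subst measure_distr) (auto intro!: arg_cong[where f = "measure M"])

lemma prob_less_min:
  "prob {x \<in> space M. k < min (Z n x) (W n x)} = prob {x \<in> space M. k < Z 0 x} ^ 2"
proof -
  let ?X = "\<lambda>i. case i of Inl n \<Rightarrow> Z n | Inr n \<Rightarrow> W n"
  have "prob (\<Inter>i\<in>{Inl n, Inr n}. ?X i -` {k<..} \<inter> space M)
      = (\<Prod>i\<in>{Inl n, Inr n}. prob (?X i -` {k<..} \<inter> space M))"
    by (rule indep_varsD[OF indep]) auto
  moreover have "(\<Inter>i\<in>{Inl n, Inr n}. ?X i -` {k<..} \<inter> space M) = {x \<in> space M. k < min (Z n x) (W n x)}"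
    by auto
  moreover have "?X (Inl n) -` {k<..} \<inter> space M = {x \<in> space M. k < Z n x}"
    and "?X (Inr n) -` {k<..} \<inter> space M = {x \<in> space M. k < W n x}"
    by auto
  moreover have "prob {x \<in> space M. k < Z n x} = prob {x \<in> space M. k < Z 0 x}"
    using prob_less_eq_measure_distr[of "Z n"] prob_less_eq_measure_distr[of "Z 0"] distr_Z[of n] by simp
  moreover have "prob {x \<in> space M. k < W n x} = prob {x \<in> space M. k < Z 0 x}"
    using prob_less_eq_measure_distr[of "W n"] prob_less_eq_measure_distr[of "Z 0"] distr_W[of n] by simp
  ultimately show ?thesis
    by (simp add: power2_eq_square)
qed

abbreviation tail :: "nat \<Rightarrow> real" where
  "tail k \<equiv> prob {x \<in> space M. k < min (Z 0 x) (W 0 x)}"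

lemma nn_integral_min_less_top_iff:
  "(\<integral>\<^sup>+ x. ennreal (real (min (Z 0 x) (W 0 x))) \<partial>M) < \<infinity> \<longleftrightarrow> summable tail"
proof -
  have "(\<integral>\<^sup>+ x. ennreal (real (min (Z 0 x) (W 0 x))) \<partial>M) = (\<integral>\<^sup>+ x. of_nat (min (Z 0 x) (W 0 x)) \<partial>M)"
    by (simp only: ennreal_of_nat_eq_real_of_nat)
  also have "\<dots> = (\<Sum>k. emeasure M {x \<in> space M. k < min (Z 0 x) (W 0 x)})"
    by (rule nn_integral_nat_function) measurable
  also have "\<dots> = (\<Sum>k. ennreal (tail k))"
    by (simp only: emeasure_eq_measure)
  finally show ?thesis
    by (simp only: ennreal_suminf_less_top_iff measure_nonneg)
qed

lemma AE_eventually_short_jump: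
  assumes "summable tail"
  shows "AE x in M. eventually (\<lambda>k. min (Z k x) (W k x) < k) sequentially"
proof -
  define A where "A k = {x \<in> space M. k < min (Z (Suc k) x) (W (Suc k) x)}" for k
  have "AE x in M. eventually (\<lambda>k. x \<in> space M - A k) sequentially"
  proof (rule borel_cantelli_AE1)
    show "A k \<in> sets M" for k
      unfolding A_def min_less_iff_conj by measurable
    show "summable (\<lambda>k. measure M (A k))"
      using assms unfolding A_def prob_less_min .
  qed (simp add: less_top[symmetric])
  then show ?thesis
  proof (rule AE_mp, intro AE_I2 impI)
    fix x assume "x \<in> space M" and "eventually (\<lambda>k. x \<in> space M - A k) sequentially"
    then have "eventually (\<lambda>k. min (Z (Suc k) x) (W (Suc k) x) < Suc k) sequentially"
      by (elim eventually_mono) (auto simp: A_def)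
    then show "eventually (\<lambda>k. min (Z k x) (W k x) < k) sequentially"
      by (rule eventually_sequentially_Suc[THEN iffD1])
  qed
qed

lemma AE_long_jumps:
  assumes "\<not> summable tail"
  shows "AE x in M. \<forall>B. \<exists>n \<ge> 1. n + B < min (Z n x) (W n x)"
proof -
  have "AE x in M. \<exists>j. x \<in> {x \<in> space M. Suc j + B < min (Z (Suc j) x) (W (Suc j) x)}" for B
  proof (rule AE_ex_mem_if_indep_events_not_summable)
    show "indep_events (\<lambda>j. {x \<in> space M. Suc j + B < min (Z (Suc j) x) (W (Suc j) x)}) UNIV"
      using indep by (rule indep_events_of_pairs) simp
    have "prob {x \<in> space M. Suc j + B < min (Z (Suc j) x) (W (Suc j) x)} = tail (j + Suc B)" for j
      using prob_less_min[of "Suc j + B" "Suc j"] prob_less_min[of "j + Suc B" 0] by simp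
    then show "\<not> summable (\<lambda>j. prob {x \<in> space M. Suc j + B < min (Z (Suc j) x) (W (Suc j) x)})"
      using assms by (simp only: summable_iff_shift[of tail "Suc B"] not_False_eq_True)
  qed
  then have "AE x in M. \<forall>B. \<exists>j. Suc j + B < min (Z (Suc j) x) (W (Suc j) x)"
    by (subst AE_all_countable) auto
  then show ?thesis
    by eventually_elim (metis le_add1 plus_1_eq_Suc)
qed

end

theorem theorem4:
  fixes M :: "'a measure" and Z W :: "nat \<Rightarrow> 'a \<Rightarrow> nat"
  assumes "prob_space M"
    and pos: "\<And>n x. x \<in> space M \<Longrightarrow> Z n x \<ge> 1 \<and> W n x \<ge> 1"
    and indep: "prob_space.indep_vars M (\<lambda>_. count_space UNIV)
                  (\<lambda>i. case i of Inl n \<Rightarrow> Z n | Inr n \<Rightarrow> W n) UNIV"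
    and idZ: "\<And>n. distr M (count_space UNIV) (Z n) = distr M (count_space UNIV) (Z 0)"
    and idW: "\<And>n. distr M (count_space UNIV) (W n) = distr M (count_space UNIV) (Z 0)"
  shows "((\<integral>\<^sup>+ x. ennreal (real (min (Z 0 x) (W 0 x))) \<partial>M) < \<infinity> \<longrightarrow>
            (AE x in M. \<exists>B::int. \<forall>n::nat. n \<ge> 1 \<longrightarrow>
                \<bar>Rval (\<lambda>k. Z k x) (\<lambda>k. W k x) (int n)\<bar> \<le> B))
       \<and> ((\<integral>\<^sup>+ x. ennreal (real (min (Z 0 x) (W 0 x))) \<partial>M) = \<infinity> \<longrightarrow>
            (AE x in M. \<forall>B::int. \<exists>n::nat. n \<ge> 1 \<and>
                \<bar>Rval (\<lambda>k. Z k x) (\<lambda>k. W k x) (int n)\<bar> > B))"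
proof -
  interpret iid_jumps M Z W
    using assms(1) indep idZ idW by (simp add: iid_jumps_def iid_jumps_axioms_def)
  show ?thesis
  proof (intro conjI impI)
    assume "(\<integral>\<^sup>+ x. ennreal (real (min (Z 0 x) (W 0 x))) \<partial>M) < \<infinity>"
    then have "AE x in M. eventually (\<lambda>k. min (Z k x) (W k x) < k) sequentially"
      by (intro AE_eventually_short_jump) (simp only: nn_integral_min_less_top_iff)
    then show "AE x in M. \<exists>B::int. \<forall>n::nat. n \<ge> 1 \<longrightarrow>
        \<bar>Rval (\<lambda>k. Z k x) (\<lambda>k. W k x) (int n)\<bar> \<le> B"
      using AE_space by eventually_elim (rule Rval_bounded_if_eventually_short_jump; metis pos)
  next
    assume "(\<integral>\<^sup>+ x. ennreal (real (min (Z 0 x) (W 0 x))) \<partial>M) = \<infinity>"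
    then have "AE x in M. \<forall>B. \<exists>n \<ge> 1. n + B < min (Z n x) (W n x)"
      using nn_integral_min_less_top_iff by (intro AE_long_jumps) simp
    then show "AE x in M. \<forall>B::int. \<exists>n::nat. n \<ge> 1 \<and>
        \<bar>Rval (\<lambda>k. Z k x) (\<lambda>k. W k x) (int n)\<bar> > B"
      by eventually_elim (rule Rval_unbounded_if_long_jumps)
  qed
qed

end
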